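(* Let $1\le k<n$ and let $C_k=[c_{ij}]_{i,j=1}^k$ be the upper-left $k\times k$ submatrix of an incomplete $n\times n$ pairwise comparison matrix, with $s_i$ the number of missing entries in the $i$-th row of $C_k$. Let $A_k$ be the $k\times k$ matrix with diagonal entries $(A_k)_{ii}=n-s_i-1$ and off-diagonal entries $(A_k)_{ij}=-1$ if $c_{ij}$ is known and $(A_k)_{ij}=0$ if $c_{ij}=?$. Then $A_k$ is invertible; hence the geometric incomplete HRE system $A_k\widehat w=b$ has a unique solution for every $b\in\mathbb{R}^k$.
   Context: An incomplete pairwise comparison matrix has entries either positive reals or unknown, written $c_{ij}=c_{ji}=?$, with known entries satisfying $c_{ii}=1$ and $c_{ij}=1/c_{ji}$. In the geometric HRE method $\widehat w$ is the vector of logarithms of the unknown weights of $a_1,\dots,a_k$, and $b$ depends on the known comparisons and reference weights. *)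

theory Defs
  imports "Jordan_Normal_Form.Matrix"
begin

text \<open>An incomplete n x n pairwise comparison matrix, indices 0..n-1.
  None represents an unknown entry ("?"), Some x a known entry.\<close>
definition incomplete_pcm :: "nat \<Rightarrow> (nat \<Rightarrow> nat \<Rightarrow> real option) \<Rightarrow> bool" where
  "incomplete_pcm n c \<longleftrightarrow>
     (\<forall>i<n. c i i = Some 1) \<and>
     (\<forall>i<n. \<forall>j<n. c i j = None \<longleftrightarrow> c j i = None) \<and>
     (\<forall>i<n. \<forall>j<n. \<forall>x. c i j = Some x \<longrightarrow> x > 0 \<and> c j i = Some (1 / x))"

definition missing_count :: "(nat \<Rightarrow> nat \<Rightarrow> real option) \<Rightarrow> nat \<Rightarrow> nat \<Rightarrow> nat" where
  "missing_count c k i = card {j. j < k \<and> c i j = None}"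

definition hre_matrix :: "nat \<Rightarrow> (nat \<Rightarrow> nat \<Rightarrow> real option) \<Rightarrow> nat \<Rightarrow> real mat" where
  "hre_matrix n c k = mat k k (\<lambda>(i, j).
      if i = j then real n - real (missing_count c k i) - 1
      else if c i j = None then 0 else -1)"

end

theory Submission
  imports Defs "Jordan_Normal_Form.Determinant"
begin

text \<open>
  Row \<open>i\<close> of \<open>A_k\<close> has \<open>k - s_i - 1\<close> off-diagonal entries \<open>-1\<close> (the known comparisons
  other than \<open>c_ii\<close>) and diagonal entry \<open>n - s_i - 1\<close>, which exceeds that count by
  \<open>n - k > 0\<close>. So \<open>A_k\<close> is strictly diagonally dominant, and such a matrix has trivial
  kernel: at a coordinate \<open>i\<close> of maximal modulus of a kernel vector \<open>v\<close>, row \<open>i\<close> gives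
  \<open>|a_ii| |v_i| \<le> (\<Sum>j\<noteq>i. |a_ij|) |v_i|\<close>, forcing \<open>v_i = 0\<close>.
\<close>

definition strictly_diag_dominant :: "'a :: linordered_idom mat \<Rightarrow> bool" where
  "strictly_diag_dominant A \<longleftrightarrow>
     (\<forall>i < dim_row A. (\<Sum>j \<in> {0..<dim_col A} - {i}. \<bar>A $$ (i, j)\<bar>) < \<bar>A $$ (i, i)\<bar>)"

lemma strictly_diag_dominant_mult_vec_eq_0:
  fixes A :: "'a :: linordered_idom mat"
  assumes A: "A \<in> carrier_mat n n" and dom: "strictly_diag_dominant A"
    and v: "v \<in> carrier_vec n" and Av: "A *\<^sub>v v = 0\<^sub>v n"
  shows "v = 0\<^sub>v n"
proof (rule ccontr)
  assume "v \<noteq> 0\<^sub>v n"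
  then obtain j0 where "j0 < n" "v $ j0 \<noteq> 0"
    using v by (metis carrier_vecD eq_vecI index_zero_vec)
  let ?abs_v = "(\<lambda>j. \<bar>v $ j\<bar>) ` {0..<n}"
  obtain i where i: "i < n" and i_max: "\<bar>v $ i\<bar> = Max ?abs_v"
    using Max_in[of ?abs_v] \<open>j0 < n\<close> by fastforce
  have le_max: "\<bar>v $ j\<bar> \<le> \<bar>v $ i\<bar>" if "j < n" for j
    unfolding i_max using that by (intro Max_ge) auto
  have "0 < \<bar>v $ j0\<bar>" using \<open>v $ j0 \<noteq> 0\<close> by simp
  with le_max[OF \<open>j0 < n\<close>] have vi_pos: "0 < \<bar>v $ i\<bar>" by linarith
  let ?off = "{0..<n} - {i}"
  have "0 = (A *\<^sub>v v) $ i" using Av i by simp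
  also have "\<dots> = (\<Sum>j \<in> {0..<n}. A $$ (i, j) * v $ j)"
    using A v i by (simp add: scalar_prod_def)
  also have "\<dots> = A $$ (i, i) * v $ i + (\<Sum>j \<in> ?off. A $$ (i, j) * v $ j)"
    using i by (simp add: sum.remove[of "{0..<n}" i])
  finally have row_i: "A $$ (i, i) * v $ i = - (\<Sum>j \<in> ?off. A $$ (i, j) * v $ j)"
    by (simp add: eq_neg_iff_add_eq_0)
  have "\<bar>A $$ (i, i)\<bar> * \<bar>v $ i\<bar> = \<bar>\<Sum>j \<in> ?off. A $$ (i, j) * v $ j\<bar>"
    using row_i by (metis abs_minus_cancel abs_mult)
  also have "\<dots> \<le> (\<Sum>j \<in> ?off. \<bar>A $$ (i, j)\<bar> * \<bar>v $ j\<bar>)"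
    unfolding abs_mult[symmetric] by (rule sum_abs)
  also have "\<dots> \<le> (\<Sum>j \<in> ?off. \<bar>A $$ (i, j)\<bar> * \<bar>v $ i\<bar>)"
    by (intro sum_mono mult_left_mono le_max) auto
  also have "\<dots> = (\<Sum>j \<in> ?off. \<bar>A $$ (i, j)\<bar>) * \<bar>v $ i\<bar>"
    by (simp add: sum_distrib_right)
  also have "\<dots> < \<bar>A $$ (i, i)\<bar> * \<bar>v $ i\<bar>"
    using dom A i vi_pos unfolding strictly_diag_dominant_def
    by (intro mult_strict_right_mono) auto
  finally show False by simp
qed

lemma strictly_diag_dominant_det_nonzero:
  fixes A :: "'a :: linordered_idom mat"
  assumes "A \<in> carrier_mat n n" and "strictly_diag_dominant A"
  shows "det A \<noteq> 0"
  using assms det_0_iff_vec_prod_zero strictly_diag_dominant_mult_vec_eq_0 by blast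

lemma det_nonzero_imp_invertible_mat:
  fixes A :: "'a :: field mat"
  assumes A: "A \<in> carrier_mat n n" and "det A \<noteq> 0"
  shows "invertible_mat A"
proof -
  from det_non_zero_imp_unit[OF assms, of "()"]
  obtain B where "B \<in> carrier_mat n n" "B * A = 1\<^sub>m n" "A * B = 1\<^sub>m n"
    unfolding Units_def ring_mat_def by auto
  then show ?thesis
    using A unfolding invertible_mat_def inverts_mat_def by auto
qed

lemma invertible_mat_mult_vec_unique_solution:
  fixes A :: "'a :: semiring_1 mat"
  assumes A: "A \<in> carrier_mat n n" and "invertible_mat A" and b: "b \<in> carrier_vec n"
  shows "\<exists>!w. w \<in> carrier_vec n \<and> A *\<^sub>v w = b"
proof -
  obtain B where AB: "A * B = 1\<^sub>m n" and BA: "B * A = 1\<^sub>m (dim_row B)"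
    using assms A unfolding invertible_mat_def inverts_mat_def by auto
  have B: "B \<in> carrier_mat n n"
    using A arg_cong[OF AB, of dim_col] arg_cong[OF BA, of dim_col] by auto
  show ?thesis
  proof
    show "B *\<^sub>v b \<in> carrier_vec n \<and> A *\<^sub>v (B *\<^sub>v b) = b"
      using A B b AB by (simp flip: assoc_mult_mat_vec[of _ n n _ n])
  next
    fix w assume w: "w \<in> carrier_vec n \<and> A *\<^sub>v w = b"
    then have "w = (B * A) *\<^sub>v w" using B BA by simp
    also have "\<dots> = B *\<^sub>v b" using A B w by (simp add: assoc_mult_mat_vec)
    finally show "w = B *\<^sub>v b" .
  qed
qed

lemma missing_count_plus_known_count:
  assumes "i < k" and "c i i \<noteq> None"
  shows "missing_count c k i + card {j \<in> {0..<k} - {i}. c i j \<noteq> None} + 1 = k"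
proof -
  have "{0..<k} = {j \<in> {0..<k}. c i j = None} \<union> {j \<in> {0..<k} - {i}. c i j \<noteq> None} \<union> {i}"
    using assms by auto
  then have "k = card ({j \<in> {0..<k}. c i j = None} \<union> {j \<in> {0..<k} - {i}. c i j \<noteq> None} \<union> {i})"
    by (metis card_atLeastLessThan minus_nat.diff_0)
  also have "\<dots> = card {j \<in> {0..<k}. c i j = None} + card {j \<in> {0..<k} - {i}. c i j \<noteq> None} + 1"
    using assms by (subst card_Un_disjoint, auto)+
  finally show ?thesis
    by (simp add: missing_count_def)
qed

lemma hre_matrix_strictly_diag_dominant:
  assumes pcm: "incomplete_pcm n c" and "k < n"
  shows "strictly_diag_dominant (hre_matrix n c k)"
  unfolding strictly_diag_dominant_def
proof (intro allI impI)
  let ?A = "hre_matrix n c k"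
  fix i assume "i < dim_row ?A"
  then have i: "i < k" by (simp add: hre_matrix_def)
  have "c i i = Some 1" using pcm i \<open>k < n\<close> unfolding incomplete_pcm_def by auto
  then have count: "missing_count c k i + card {j \<in> {0..<k} - {i}. c i j \<noteq> None} + 1 = k"
    using missing_count_plus_known_count[OF i] by simp
  have "(\<Sum>j \<in> {0..<dim_col ?A} - {i}. \<bar>?A $$ (i, j)\<bar>)
        = (\<Sum>j \<in> {0..<k} - {i}. if c i j = None then 0 else 1)"
    using i by (intro sum.cong) (auto simp: hre_matrix_def)
  also have "\<dots> = real (card {j \<in> {0..<k} - {i}. c i j \<noteq> None})"
    by (simp add: sum.If_cases Int_def)
  also have "\<dots> < real n - real (missing_count c k i) - 1"
    using count \<open>k < n\<close> by linarith
  also have "\<dots> = \<bar>?A $$ (i, i)\<bar>"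
    using count \<open>k < n\<close> i by (simp add: hre_matrix_def)
  finally show "(\<Sum>j \<in> {0..<dim_col ?A} - {i}. \<bar>?A $$ (i, j)\<bar>) < \<bar>?A $$ (i, i)\<bar>" .
qed

theorem mainTheorem10:
  fixes n k :: nat and c :: "nat \<Rightarrow> nat \<Rightarrow> real option"
  assumes "incomplete_pcm n c" and "1 \<le> k" and "k < n"
  shows "invertible_mat (hre_matrix n c k) \<and>
         (\<forall>b \<in> carrier_vec k. \<exists>!w. w \<in> carrier_vec k \<and> hre_matrix n c k *\<^sub>v w = b)"
proof -
  have A: "hre_matrix n c k \<in> carrier_mat k k"
    by (simp add: hre_matrix_def)
  have "det (hre_matrix n c k) \<noteq> 0"
    using strictly_diag_dominant_det_nonzero[OF A]
      hre_matrix_strictly_diag_dominant[OF assms(1,3)] by blast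
  then have "invertible_mat (hre_matrix n c k)"
    using det_nonzero_imp_invertible_mat[OF A] by blast
  then show ?thesis
    using invertible_mat_mult_vec_unique_solution[OF A] by blast
qed

end
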